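(* Assume the Cartan matrix $\mathbf C$ is symmetric, and let $i\in I'$. Then we can write $\Lambda_0-\delta+\alpha_i=w(i)\Lambda_0$ for a unique $\Lambda_0$-minuscule element $w(i)\in W$.
   Context: $\mathbf C=(c_{ij})_{i,j\in I}$ is a Cartan matrix of untwisted affine type, $I=\{0,1,\dots,l\}$, $0$ the affine vertex, $I'=I\setminus\{0\}$; $(\mathfrak h,\Pi,\Pi^\vee)$ a realization with simple roots $\alpha_i$, coroots $\alpha_i^\vee$, pairing $\langle\cdot,\cdot\rangle$, $\delta$ the null root. $\Lambda_i$ ($i\in I$) are the fundamental weights, $\langle\Lambda_i,\alpha_j^\vee\rangle=\delta_{ij}$, and $P=\bigoplus\mathbb Z\Lambda_i$. $W$ is the affine Weyl group generated by $r_i$, acting by $r_i(\lambda)=\lambda-\langle\lambda,\alpha_i^\vee\rangle\alpha_i$. For $\Lambda\in P$, $w\in W$ is $\Lambda$-minuscule if it has a reduced expression $w=r_{i_l}\cdots r_{i_1}$ with $\langle r_{i_{k-1}}\cdots r_{i_1}\Lambda,\alpha_{i_k}^\vee\rangle=1$ for all $1\le k\le l$. *)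

theory Defs
  imports Complex_Main
begin

text \<open>Cartan matrices are functions nat => nat => int, relevant on indices 0..l
  (I = {0..l}, I' = {1..l}, 0 = affine vertex).  Matrix convention (Kac):
  c_ij = <alpha_i^vee, alpha_j>.\<close>

type_synonym cmat = "nat \<Rightarrow> nat \<Rightarrow> int"

definition gcm :: "cmat \<Rightarrow> nat set \<Rightarrow> bool" where
  "gcm C J \<longleftrightarrow> (\<forall>i\<in>J. C i i = 2) \<and>
     (\<forall>i\<in>J. \<forall>j\<in>J. i \<noteq> j \<longrightarrow> C i j \<le> 0) \<and>
     (\<forall>i\<in>J. \<forall>j\<in>J. C i j = 0 \<longleftrightarrow> C j i = 0)"

definition indecomposable :: "cmat \<Rightarrow> nat set \<Rightarrow> bool" where
  "indecomposable C J \<longleftrightarrow> \<not> (\<exists>A B. A \<noteq> {} \<and> B \<noteq> {} \<and> A \<inter> B = {} \<and> A \<union> B = J \<and>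
       (\<forall>a\<in>A. \<forall>b\<in>B. C a b = 0))"

definition mvec :: "cmat \<Rightarrow> nat set \<Rightarrow> (nat \<Rightarrow> real) \<Rightarrow> nat \<Rightarrow> real" where
  "mvec C J v i = (\<Sum>k\<in>J. real_of_int (C i k) * v k)"

definition finite_type :: "cmat \<Rightarrow> nat set \<Rightarrow> bool" where
  "finite_type C J \<longleftrightarrow>
     (\<forall>v. (\<forall>i\<in>J. mvec C J v i = 0) \<longrightarrow> (\<forall>i\<in>J. v i = 0)) \<and>
     (\<exists>u. (\<forall>i\<in>J. u i > 0) \<and> (\<forall>i\<in>J. mvec C J u i > 0)) \<and>
     (\<forall>v. (\<forall>i\<in>J. mvec C J v i \<ge> 0) \<longrightarrow> (\<forall>i\<in>J. v i > 0) \<or> (\<forall>i\<in>J. v i = 0))"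

definition affine_type :: "cmat \<Rightarrow> nat set \<Rightarrow> bool" where
  "affine_type C J \<longleftrightarrow>
     (\<exists>u. (\<exists>i\<in>J. u i \<noteq> 0) \<and> (\<forall>i\<in>J. mvec C J u i = 0) \<and>
          (\<forall>v. (\<forall>i\<in>J. mvec C J v i = 0) \<longrightarrow> (\<exists>c. \<forall>i\<in>J. v i = c * u i))) \<and>
     (\<exists>u. (\<forall>i\<in>J. u i > 0) \<and> (\<forall>i\<in>J. mvec C J u i = 0)) \<and>
     (\<forall>v. (\<forall>i\<in>J. mvec C J v i \<ge> 0) \<longrightarrow> (\<forall>i\<in>J. mvec C J v i = 0))"

text \<open>Finite root system of the finite Cartan matrix C restricted to J,
  in coordinates w.r.t. the simple roots; simple reflections on roots and on coroots.\<close>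
definition fin_refl :: "cmat \<Rightarrow> nat set \<Rightarrow> nat \<Rightarrow> (nat \<Rightarrow> int) \<Rightarrow> nat \<Rightarrow> int" where
  "fin_refl C J j v = v(j := v j - (\<Sum>k\<in>J. C j k * v k))"

definition fin_corefl :: "cmat \<Rightarrow> nat set \<Rightarrow> nat \<Rightarrow> (nat \<Rightarrow> int) \<Rightarrow> nat \<Rightarrow> int" where
  "fin_corefl C J j u = u(j := u j - (\<Sum>k\<in>J. u k * C k j))"

definition unitv :: "nat \<Rightarrow> nat \<Rightarrow> int" where
  "unitv m = (\<lambda>k. if k = m then 1 else 0)"

definition fin_roots :: "cmat \<Rightarrow> nat set \<Rightarrow> (nat \<Rightarrow> int) set" where
  "fin_roots C J = {fold (fin_refl C J) ws (unitv m) | ws m. set ws \<subseteq> J \<and> m \<in> J}"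

text \<open>Untwisted affine type with affine vertex 0 (Kac, Table Aff 1): the restriction to
  I' = {1..l} is an indecomposable finite type Cartan matrix and C is its extended Cartan
  matrix, i.e. alpha_0 = delta - theta with theta the highest root:
  c_j0 = -<alpha_j^vee, theta>, c_0j = -<theta^vee, alpha_j>, c_00 = 2.\<close>
definition untwisted_affine :: "cmat \<Rightarrow> nat \<Rightarrow> bool" where
  "untwisted_affine C l \<longleftrightarrow> l \<ge> 1 \<and> gcm C {0..l} \<and> affine_type C {0..l} \<and>
     indecomposable C {0..l} \<and> finite_type C {1..l} \<and> indecomposable C {1..l} \<and>
     (\<exists>ws m. set ws \<subseteq> {1..l} \<and> m \<in> {1..l} \<and>
        (let \<theta> = fold (fin_refl C {1..l}) ws (unitv m);
             \<theta>v = fold (fin_corefl C {1..l}) ws (unitv m) in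
          (\<forall>\<beta>\<in>fin_roots C {1..l}. \<forall>j\<in>{1..l}. \<beta> j \<le> \<theta> j) \<and>
          C 0 0 = 2 \<and>
          (\<forall>j\<in>{1..l}. C j 0 = - (\<Sum>k\<in>{1..l}. C j k * \<theta> k)) \<and>
          (\<forall>j\<in>{1..l}. C 0 j = - (\<Sum>k\<in>{1..l}. \<theta>v k * C k j))))"

text \<open>Realization: h* has basis alpha_0, ..., alpha_l, Lambda_0 (Kac 6.2), with
  <alpha_j, alpha_i^vee> = c_ij and <Lambda_0, alpha_i^vee> = delta_{i0}.\<close>
datatype wbasis = Alpha nat | Lam0

type_synonym weight = "wbasis \<Rightarrow> int"

definition alpha :: "nat \<Rightarrow> weight" where
  "alpha j = (\<lambda>b. if b = Alpha j then 1 else 0)"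

definition Lambda0 :: weight where
  "Lambda0 = (\<lambda>b. if b = Lam0 then 1 else 0)"

definition null_coeffs :: "cmat \<Rightarrow> nat \<Rightarrow> nat \<Rightarrow> int" where
  "null_coeffs C l = (THE a. (\<forall>j\<le>l. a j > 0) \<and> (\<forall>j>l. a j = 0) \<and>
      (\<forall>i\<le>l. (\<Sum>j\<le>l. C i j * a j) = 0) \<and> Gcd (a ` {..l}) = 1)"

definition delta :: "cmat \<Rightarrow> nat \<Rightarrow> weight" where
  "delta C l = (\<lambda>b. case b of Alpha j \<Rightarrow> null_coeffs C l j | Lam0 \<Rightarrow> 0)"

definition pair :: "cmat \<Rightarrow> nat \<Rightarrow> weight \<Rightarrow> nat \<Rightarrow> int" where
  "pair C l \<mu> i = (\<Sum>j\<le>l. C i j * \<mu> (Alpha j)) + (if i = 0 then \<mu> Lam0 else 0)"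

definition refl :: "cmat \<Rightarrow> nat \<Rightarrow> nat \<Rightarrow> weight \<Rightarrow> weight" where
  "refl C l i \<mu> = (\<lambda>b. \<mu> b - pair C l \<mu> i * alpha i b)"

text \<open>word [i_1, ..., i_n] denotes r_{i_n} ... r_{i_1} (i_1 applied first)\<close>
definition word_act :: "cmat \<Rightarrow> nat \<Rightarrow> nat list \<Rightarrow> weight \<Rightarrow> weight" where
  "word_act C l ws = fold (refl C l) ws"

definition weyl_group :: "cmat \<Rightarrow> nat \<Rightarrow> (weight \<Rightarrow> weight) set" where
  "weyl_group C l = {word_act C l ws | ws. set ws \<subseteq> {0..l}}"

definition reduced_word :: "cmat \<Rightarrow> nat \<Rightarrow> nat list \<Rightarrow> bool" where
  "reduced_word C l ws \<longleftrightarrow> set ws \<subseteq> {0..l} \<and>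
     (\<forall>vs. set vs \<subseteq> {0..l} \<and> word_act C l vs = word_act C l ws \<longrightarrow> length ws \<le> length vs)"

definition minuscule :: "cmat \<Rightarrow> nat \<Rightarrow> weight \<Rightarrow> (weight \<Rightarrow> weight) \<Rightarrow> bool" where
  "minuscule C l \<Lambda> w \<longleftrightarrow> (\<exists>ws. reduced_word C l ws \<and> w = word_act C l ws \<and>
     (\<forall>k<length ws. pair C l (word_act C l (take k ws) \<Lambda>) (ws ! k) = 1))"

end

theory Submission
  imports Defs
begin

text \<open>
  Since \<open>r\<^sub>0\<Lambda>\<^sub>0 = \<Lambda>\<^sub>0 - \<alpha>\<^sub>0 = \<Lambda>\<^sub>0 - \<delta> + \<theta>\<close> and \<open>\<langle>\<Lambda>\<^sub>0 - \<delta> + \<beta>, \<alpha>\<^sub>j\<^sup>\<or>\<rangle> = \<langle>\<beta>, \<alpha>\<^sub>j\<^sup>\<or>\<rangle>\<close>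
  for \<open>j \<in> I'\<close>, it suffices to walk down from \<open>\<theta>\<close> to \<open>\<alpha>\<^sub>i\<close> through positive roots of the
  finite root system by steps \<open>\<beta> \<mapsto> \<beta> - \<alpha>\<^sub>j\<close> with \<open>\<langle>\<beta>, \<alpha>\<^sub>j\<^sup>\<or>\<rangle> = 1\<close>. Such steps exist
  because the symmetric affine form is positive semidefinite with radical \<open>\<int>\<delta>\<close>: this forces
  \<open>\<langle>\<beta>, \<alpha>\<^sub>j\<^sup>\<or>\<rangle> \<ge> -1\<close> for a positive root \<open>\<beta>\<close>, and a positive root pairing nonnegatively with
  all \<open>\<alpha>\<^sub>j\<^sup>\<or>\<close> is \<open>\<theta>\<close>, so every \<open>\<beta> \<noteq> \<theta>\<close> can be raised to \<open>\<beta> + \<alpha>\<^sub>j\<close>.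

  The resulting word is \<open>\<Lambda>\<^sub>0\<close>-minuscule; it is reduced because \<open>\<langle>w\<Lambda>\<^sub>0, \<alpha>\<^sub>j\<^sup>\<or>\<rangle> > 0\<close> makes
  \<open>r\<^sub>jw\<close> longer than \<open>w\<close> (Kac, Lemma 3.11, proved by rank-two parabolic factorisations).
  For uniqueness, two minuscule words sending \<open>\<Lambda>\<^sub>0\<close> to the same weight have the same length,
  namely minus the height of that weight, and the letters of one can be peeled off the other, since
  \<open>\<langle>w\<Lambda>\<^sub>0, \<alpha>\<^sub>j\<^sup>\<or>\<rangle> < 0\<close> makes \<open>r\<^sub>jw\<close> shorter.
\<close>

fun alternating :: "nat \<Rightarrow> nat \<Rightarrow> nat \<Rightarrow> nat list" where
  "alternating a b 0 = []"
| "alternating a b (Suc n) = a # alternating b a n"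

lemma set_alternating: "set (alternating a b n) \<subseteq> {a, b}"
  by (induction n arbitrary: a b) auto

lemma alternating_if_no_square:
  assumes "set x \<subseteq> {a, b}" and "\<And>p c r. x = p @ c # c # r \<Longrightarrow> False" and "x \<noteq> [] \<Longrightarrow> hd x = a"
  shows "x = alternating a b (length x)"
  using assms
proof (induction x arbitrary: a b)
  case (Cons c r)
  then have c: "c = a" by simp
  show ?case
  proof (cases r)
    case (Cons d r')
    have "d \<noteq> a" using Cons.prems(2)[of "[]" a r'] \<open>r = d # r'\<close> c by auto
    then have "d = b" using Cons.prems(1) \<open>r = d # r'\<close> by auto
    have "r = p @ e # e # q \<Longrightarrow> False" for p e q using Cons.prems(2)[of "c # p" e q] by auto
    then have "r = alternating b a (length r)"
      using Cons.IH[of b a] Cons.prems(1) \<open>r = d # r'\<close> \<open>d = b\<close> c by auto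
    then show ?thesis using c by simp
  qed (use c in simp)
qed simp

section \<open>Reflections and the invariant form\<close>

locale symmetric_gcm =
  fixes C :: cmat and l :: nat
  assumes diag: "\<And>i. i \<le> l \<Longrightarrow> C i i = 2"
    and off_diag_nonpos: "\<And>i j. i \<le> l \<Longrightarrow> j \<le> l \<Longrightarrow> i \<noteq> j \<Longrightarrow> C i j \<le> 0"
    and symmetric: "\<And>i j. i \<le> l \<Longrightarrow> j \<le> l \<Longrightarrow> C i j = C j i"
begin

lemma pair_lincomb: "pair C l (\<lambda>b. x * \<mu> b + y * \<nu> b) i = x * pair C l \<mu> i + y * pair C l \<nu> i"
  unfolding pair_def by (simp add: sum.distrib sum_distrib_left algebra_simps)

lemma pair_add: "pair C l (\<lambda>b. \<mu> b + \<nu> b) i = pair C l \<mu> i + pair C l \<nu> i"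
  using pair_lincomb[of 1 \<mu> 1 \<nu> i] by simp

lemma pair_diff: "pair C l (\<lambda>b. \<mu> b - \<nu> b) i = pair C l \<mu> i - pair C l \<nu> i"
  using pair_lincomb[of 1 \<mu> "-1" \<nu> i] by simp

lemma pair_alpha: "j \<le> l \<Longrightarrow> pair C l (alpha j) i = C i j"
  unfolding pair_def alpha_def by (simp add: if_distrib cong: if_cong)

lemma pair_Lambda0: "pair C l Lambda0 i = (if i = 0 then 1 else 0)"
  unfolding pair_def Lambda0_def by simp

lemma refl_apply: "refl C l j \<mu> b = \<mu> b - pair C l \<mu> j * alpha j b"
  by (simp add: refl_def)

lemma refl_lincomb:
  "refl C l i (\<lambda>b. x * \<mu> b + y * \<nu> b) = (\<lambda>b. x * refl C l i \<mu> b + y * refl C l i \<nu> b)"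
  unfolding refl_def by (simp add: pair_lincomb algebra_simps fun_eq_iff)

lemma pair_refl:
  assumes "j \<le> l" shows "pair C l (refl C l j \<mu>) i = pair C l \<mu> i - pair C l \<mu> j * C i j"
proof -
  have "refl C l j \<mu> = (\<lambda>b. 1 * \<mu> b + (- pair C l \<mu> j) * alpha j b)"
    unfolding refl_def by (simp add: fun_eq_iff)
  then show ?thesis using assms by (simp only: pair_lincomb pair_alpha)
qed

lemma refl_refl: "j \<le> l \<Longrightarrow> refl C l j (refl C l j \<mu>) = \<mu>"
  using pair_refl[of j \<mu> j] diag[of j] by (simp add: refl_apply fun_eq_iff algebra_simps)

lemma refl_alpha_self: "j \<le> l \<Longrightarrow> refl C l j (alpha j) = (\<lambda>b. - alpha j b)"
  using diag[of j] by (simp add: refl_def pair_alpha fun_eq_iff)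

lemma refl_commute:
  assumes "s \<le> l" "s' \<le> l" "C s s' = 0"
  shows "refl C l s (refl C l s' \<mu>) = refl C l s' (refl C l s \<mu>)"
  using assms symmetric[of s s'] by (simp add: fun_eq_iff refl_apply pair_refl algebra_simps)

lemma refl_braid:
  assumes "s \<le> l" "s' \<le> l" "C s s' = -1"
  shows "refl C l s (refl C l s' (refl C l s \<mu>)) = refl C l s' (refl C l s (refl C l s' \<mu>))"
  using assms symmetric[of s s'] diag[of s] diag[of s']
  by (simp add: fun_eq_iff refl_apply pair_refl algebra_simps)

lemma word_act_Nil: "word_act C l [] = id"
  by (simp add: word_act_def)

lemma word_act_Cons: "word_act C l (a # ws) \<mu> = word_act C l ws (refl C l a \<mu>)"
  by (simp add: word_act_def)

lemma word_act_Cons_comp: "word_act C l (a # ws) = word_act C l ws \<circ> refl C l a"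
  by (simp add: fun_eq_iff word_act_Cons)

lemma word_act_append: "word_act C l (xs @ ys) = word_act C l ys \<circ> word_act C l xs"
  by (simp add: word_act_def)

lemma word_act_snoc: "word_act C l (xs @ [a]) \<mu> = refl C l a (word_act C l xs \<mu>)"
  by (simp add: word_act_def)

lemma word_act_lincomb:
  "word_act C l ws (\<lambda>b. x * \<mu> b + y * \<nu> b) = (\<lambda>b. x * word_act C l ws \<mu> b + y * word_act C l ws \<nu> b)"
  by (induction ws arbitrary: \<mu> \<nu>) (simp_all add: word_act_Cons word_act_Nil refl_lincomb)

lemma word_act_cancel_square: "t \<le> l \<Longrightarrow> word_act C l (p @ t # t # q) = word_act C l (p @ q)"
  by (simp add: word_act_append word_act_Cons fun_eq_iff refl_refl)

lemma word_act_commute: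
  assumes "s \<le> l" "s' \<le> l" "C s s' = 0"
  shows "word_act C l (s # s' # q) = word_act C l (s' # s # q)"
  by (simp add: fun_eq_iff word_act_Cons refl_commute[OF assms])

lemma word_act_braid:
  assumes "s \<le> l" "s' \<le> l" "C s s' = -1"
  shows "word_act C l (s # s' # s # q) = word_act C l (s' # s # s' # q)"
  by (simp add: fun_eq_iff word_act_Cons refl_braid[OF assms])

lemma word_act_rev_cancel: "set ws \<subseteq> {0..l} \<Longrightarrow> word_act C l (rev ws) (word_act C l ws \<mu>) = \<mu>"
  by (induction ws arbitrary: \<mu>) (simp_all add: word_act_Nil word_act_Cons word_act_snoc refl_refl)

lemma word_act_cancel_rev: "set ws \<subseteq> {0..l} \<Longrightarrow> word_act C l ws (word_act C l (rev ws) \<mu>) = \<mu>"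
  using word_act_rev_cancel[of "rev ws"] by simp

lemma word_act_rev_eq:
  assumes "set ws \<subseteq> {0..l}" "set vs \<subseteq> {0..l}" "word_act C l vs = word_act C l ws"
  shows "word_act C l (rev vs) = word_act C l (rev ws)"
proof
  fix \<mu>
  have "word_act C l (rev vs) \<mu> = word_act C l (rev vs) (word_act C l vs (word_act C l (rev ws) \<mu>))"
    using assms(1,3) word_act_cancel_rev by metis
  also have "\<dots> = word_act C l (rev ws) \<mu>" using assms(2) by (simp add: word_act_rev_cancel)
  finally show "word_act C l (rev vs) \<mu> = word_act C l (rev ws) \<mu>" .
qed

lemma sum_atMost_indicator: "j \<le> l \<Longrightarrow> (\<Sum>k\<le>l. (if k = j then (1::int) else 0) * f k) = f j"
  by (simp add: if_distrib[of "\<lambda>x. x * _"] sum.delta cong: if_cong)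

lemma sum_atMost_indicator': "j \<le> l \<Longrightarrow> (\<Sum>k\<le>l. f k * (if k = j then (1::int) else 0)) = f j"
  using sum_atMost_indicator[of j f] by (simp add: mult.commute)

text \<open>The normalised invariant form \<open>(\<mu>|\<gamma>)\<close>, determined by \<open>(\<mu>|\<alpha>\<^sub>k) = \<langle>\<mu>,\<alpha>\<^sub>k\<^sup>\<or>\<rangle>\<close>
  and \<open>(\<Lambda>\<^sub>0|\<Lambda>\<^sub>0) = 0\<close>; it is symmetric because \<open>C\<close> is.\<close>
definition form :: "weight \<Rightarrow> weight \<Rightarrow> int" where
  "form \<mu> \<gamma> = (\<Sum>k\<le>l. \<gamma> (Alpha k) * pair C l \<mu> k) + \<gamma> Lam0 * \<mu> (Alpha 0)"

lemma form_alpha: "j \<le> l \<Longrightarrow> form \<mu> (alpha j) = pair C l \<mu> j"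
  unfolding form_def alpha_def using sum_atMost_indicator[of j "pair C l \<mu>"] by simp

lemma form_Lambda0: "form Lambda0 \<gamma> = \<gamma> (Alpha 0)"
proof -
  have "(\<Sum>k\<le>l. \<gamma> (Alpha k) * pair C l Lambda0 k) = \<gamma> (Alpha 0)"
    using sum_atMost_indicator'[of 0 "\<lambda>k. \<gamma> (Alpha k)"] by (simp add: pair_Lambda0)
  then show ?thesis by (simp add: form_def Lambda0_def)
qed

lemma form_expand:
  "form \<mu> \<gamma> = (\<Sum>k\<le>l. \<Sum>m\<le>l. \<gamma> (Alpha k) * C k m * \<mu> (Alpha m))
     + \<gamma> (Alpha 0) * \<mu> Lam0 + \<gamma> Lam0 * \<mu> (Alpha 0)"
proof -
  have "form \<mu> \<gamma> = (\<Sum>k\<le>l. (\<Sum>m\<le>l. \<gamma> (Alpha k) * C k m * \<mu> (Alpha m))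
      + (\<gamma> (Alpha k) * \<mu> Lam0) * (if k = 0 then 1 else 0)) + \<gamma> Lam0 * \<mu> (Alpha 0)"
    unfolding form_def pair_def by (auto intro!: sum.cong simp: algebra_simps sum_distrib_left)
  then show ?thesis by (simp only: sum.distrib sum_atMost_indicator'[of 0, simplified])
qed

lemma form_sym: "form \<mu> \<gamma> = form \<gamma> \<mu>"
proof -
  have "(\<Sum>k\<le>l. \<Sum>m\<le>l. \<gamma> (Alpha k) * C k m * \<mu> (Alpha m))
      = (\<Sum>m\<le>l. \<Sum>k\<le>l. \<mu> (Alpha m) * C m k * \<gamma> (Alpha k))"
    by (subst sum.swap) (auto intro!: sum.cong simp: symmetric)
  then show ?thesis unfolding form_expand by simp
qed

lemma form_lincomb_right: "form \<mu> (\<lambda>b. x * \<gamma> b + y * \<gamma>' b) = x * form \<mu> \<gamma> + y * form \<mu> \<gamma>'"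
  unfolding form_def by (simp add: algebra_simps sum.distrib sum_distrib_left)

lemma form_lincomb_left: "form (\<lambda>b. x * \<gamma> b + y * \<gamma>' b) \<mu> = x * form \<gamma> \<mu> + y * form \<gamma>' \<mu>"
  using form_lincomb_right form_sym by metis

lemma form_refl: assumes "i \<le> l" shows "form (refl C l i \<mu>) \<nu> = form \<mu> (refl C l i \<nu>)"
proof -
  have "refl C l i \<mu> = (\<lambda>b. 1 * \<mu> b + (- pair C l \<mu> i) * alpha i b)"
    "refl C l i \<nu> = (\<lambda>b. 1 * \<nu> b + (- pair C l \<nu> i) * alpha i b)"
    by (simp_all add: fun_eq_iff refl_apply)
  then show ?thesis
    using assms form_sym[of "alpha i"]
    by (simp only: form_lincomb_left form_lincomb_right form_alpha) simp
qed

lemma form_word_act: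
  "set ws \<subseteq> {0..l} \<Longrightarrow> form (word_act C l ws \<mu>) \<nu> = form \<mu> (word_act C l (rev ws) \<nu>)"
  by (induction ws arbitrary: \<nu> rule: rev_induct) (simp_all add: word_act_Nil word_act_snoc form_refl word_act_Cons)

lemma form_word_act_self:
  "set ws \<subseteq> {0..l} \<Longrightarrow> form (word_act C l ws \<mu>) (word_act C l ws \<mu>) = form \<mu> \<mu>"
  using form_word_act word_act_rev_cancel by metis

lemma pair_word_act_Lambda0:
  "set ws \<subseteq> {0..l} \<Longrightarrow> j \<le> l \<Longrightarrow>
     pair C l (word_act C l ws Lambda0) j = word_act C l (rev ws) (alpha j) (Alpha 0)"
  by (metis form_alpha form_word_act form_Lambda0)

section \<open>Length and positivity of roots\<close>

definition wlen :: "(weight \<Rightarrow> weight) \<Rightarrow> nat" where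
  "wlen w = (LEAST n. \<exists>ws. set ws \<subseteq> {0..l} \<and> length ws = n \<and> word_act C l ws = w)"

lemma wlen_le: "set ws \<subseteq> {0..l} \<Longrightarrow> wlen (word_act C l ws) \<le> length ws"
  unfolding wlen_def by (rule Least_le) blast

lemma obtain_shortest_word:
  assumes "set ws \<subseteq> {0..l}"
  obtains vs where "set vs \<subseteq> {0..l}" "length vs = wlen (word_act C l ws)"
    "word_act C l vs = word_act C l ws"
proof -
  have "\<exists>vs. set vs \<subseteq> {0..l} \<and> length vs = wlen (word_act C l ws) \<and> word_act C l vs = word_act C l ws"
    unfolding wlen_def by (rule LeastI_ex) (use assms in blast)
  then show ?thesis using that by blast
qed

lemma wlen_rev: assumes "set ws \<subseteq> {0..l}" shows "wlen (word_act C l (rev ws)) = wlen (word_act C l ws)"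
proof -
  have le: "wlen (word_act C l (rev ws)) \<le> wlen (word_act C l ws)" if ws: "set ws \<subseteq> {0..l}" for ws
  proof -
    obtain vs where vs: "set vs \<subseteq> {0..l}" "length vs = wlen (word_act C l ws)"
      "word_act C l vs = word_act C l ws"
      using obtain_shortest_word[OF ws] by blast
    then show ?thesis using wlen_le[of "rev vs"] word_act_rev_eq[OF ws vs(1) vs(3)] by simp
  qed
  show ?thesis using le[OF assms] le[of "rev ws"] assms by fastforce
qed

lemma wlen_append_le:
  assumes "set a \<subseteq> {0..l}" "set b \<subseteq> {0..l}"
  shows "wlen (word_act C l (a @ b)) \<le> wlen (word_act C l a) + wlen (word_act C l b)"
proof -
  obtain a' where a': "set a' \<subseteq> {0..l}" "length a' = wlen (word_act C l a)" "word_act C l a' = word_act C l a"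
    using obtain_shortest_word[OF assms(1)] by blast
  obtain b' where b': "set b' \<subseteq> {0..l}" "length b' = wlen (word_act C l b)" "word_act C l b' = word_act C l b"
    using obtain_shortest_word[OF assms(2)] by blast
  have "word_act C l (a' @ b') = word_act C l (a @ b)" using a' b' by (simp add: word_act_append)
  then show ?thesis using wlen_le[of "a' @ b'"] a' b' by simp
qed

lemma wlen_Cons_le: "set ws \<subseteq> {0..l} \<Longrightarrow> s \<le> l \<Longrightarrow> wlen (word_act C l ws) \<le> wlen (word_act C l (s # ws)) + 1"
  using wlen_append_le[of "[s]" "s # ws"] wlen_le[of "[s]"] word_act_cancel_square[of s "[]" ws] by simp

lemma exists_descent:
  assumes "set ws \<subseteq> {0..l}" "wlen (word_act C l ws) \<noteq> 0"
  obtains s where "s \<le> l" "wlen (word_act C l (s # ws)) < wlen (word_act C l ws)"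
proof -
  obtain ms where ms: "set ms \<subseteq> {0..l}" "length ms = wlen (word_act C l ws)"
    "word_act C l ms = word_act C l ws"
    using obtain_shortest_word[OF assms(1)] by blast
  then obtain s rest where "ms = s # rest" using assms(2) by (cases ms) auto
  then have "word_act C l (s # ws) = word_act C l rest" "s \<le> l" "set rest \<subseteq> {0..l}"
    using ms word_act_cancel_square[of s "[]" rest] by (auto simp: word_act_Cons_comp)
  then show ?thesis using that wlen_le[of rest] ms \<open>ms = s # rest\<close> by fastforce
qed

definition nonneg_weight :: "weight \<Rightarrow> bool" where
  "nonneg_weight \<gamma> \<longleftrightarrow> (\<forall>b. 0 \<le> \<gamma> b)"

definition alpha2 :: "nat \<Rightarrow> nat \<Rightarrow> int \<Rightarrow> int \<Rightarrow> weight" where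
  "alpha2 s s' p q = (\<lambda>z. p * alpha s z + q * alpha s' z)"

lemma alpha_eq_alpha2: "alpha s = alpha2 s s' 1 0"
  by (simp add: alpha2_def fun_eq_iff)

lemma pair_alpha2: "s \<le> l \<Longrightarrow> s' \<le> l \<Longrightarrow> pair C l (alpha2 s s' p q) j = C j s * p + C j s' * q"
  unfolding alpha2_def by (simp add: pair_lincomb pair_alpha mult.commute)

lemma refl_alpha2_left:
  assumes "s \<le> l" "s' \<le> l" "s \<noteq> s'"
  shows "refl C l s (alpha2 s s' p q) = alpha2 s s' (- p - C s s' * q) q"
proof -
  have "pair C l (alpha2 s s' p q) s = 2 * p + C s s' * q" using assms diag[of s] by (simp add: pair_alpha2)
  then show ?thesis using assms by (auto simp: refl_apply alpha2_def alpha_def fun_eq_iff algebra_simps)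
qed

lemma refl_alpha2_right:
  assumes "s \<le> l" "s' \<le> l" "s \<noteq> s'"
  shows "refl C l s' (alpha2 s s' p q) = alpha2 s s' p (- C s s' * p - q)"
proof -
  have "pair C l (alpha2 s s' p q) s' = C s s' * p + 2 * q"
    using assms diag[of s'] symmetric[of s s'] by (simp add: pair_alpha2)
  then show ?thesis using assms by (auto simp: refl_apply alpha2_def alpha_def fun_eq_iff algebra_simps)
qed

text \<open>For \<open>C s s' \<le> -2\<close> the reflections \<open>r\<^sub>s, r\<^sub>s'\<close> alternately increase the two
  coefficients, which therefore stay nonnegative.\<close>
lemma word_act_alternating_alpha2:
  assumes "s \<le> l" "s' \<le> l" "s \<noteq> s'" "C s s' \<le> -2" "0 \<le> q" "q \<le> p"
  shows "\<exists>p' q'. 0 \<le> p' \<and> 0 \<le> q' \<and> word_act C l (alternating s' s n) (alpha2 s s' p q) = alpha2 s s' p' q'"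
  using assms
proof (induction n arbitrary: s s' p q)
  case 0
  then show ?case by (intro exI[of _ p] exI[of _ q]) (simp add: word_act_Nil)
next
  case (Suc n)
  define q1 where "q1 = - C s s' * p - q"
  have "2 * p \<le> - C s s' * p" using Suc.prems by (intro mult_right_mono) auto
  then have "0 \<le> p" "p \<le> q1" using Suc.prems q1_def by auto
  moreover have "C s' s \<le> -2" using Suc.prems symmetric[of s s'] by simp
  ultimately obtain p' q' where "0 \<le> p'" "0 \<le> q'"
    "word_act C l (alternating s s' n) (alpha2 s' s q1 p) = alpha2 s' s p' q'"
    using Suc.IH[of s' s p q1] Suc.prems by auto
  moreover have "alpha2 s' s a b = alpha2 s s' b a" for a b by (auto simp: alpha2_def fun_eq_iff)
  ultimately show ?case
    using Suc.prems by (auto simp: word_act_Cons refl_alpha2_right q1_def)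
qed

lemma dihedral_word_alternating:
  assumes "s \<le> l" "s' \<le> l" "set x \<subseteq> {s, s'}"
    and shortest: "\<And>y. set y \<subseteq> {s, s'} \<Longrightarrow> word_act C l y = word_act C l x \<Longrightarrow> length x \<le> length y"
    and shortest_s: "\<And>y. set y \<subseteq> {s, s'} \<Longrightarrow> word_act C l y = word_act C l (s # x) \<Longrightarrow> length x \<le> length y"
  shows "x = alternating s' s (length x)"
proof (rule alternating_if_no_square)
  show "set x \<subseteq> {s', s}" using assms(3) by auto
next
  fix p t r assume x: "x = p @ t # t # r"
  then have "t \<le> l" "set (p @ r) \<subseteq> {s, s'}" using assms(1-3) by auto
  then show False using shortest[of "p @ r"] word_act_cancel_square x by fastforce
next
  assume "x \<noteq> []"
  then obtain t r where x: "x = t # r" by (cases x) auto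
  have "t \<noteq> s"
  proof
    assume "t = s"
    then have "word_act C l r = word_act C l (s # x)"
      using x word_act_cancel_square[of s "[]" r] assms(1) by simp
    then show False using shortest_s[of r] x assms(3) by fastforce
  qed
  then show "hd x = s'" using x assms(3) by auto
qed

lemma dihedral_length_bound:
  assumes "s \<le> l" "s' \<le> l" "x = alternating s' s k"
    and shortest_s: "\<And>y. set y \<subseteq> {s, s'} \<Longrightarrow> word_act C l y = word_act C l (s # x) \<Longrightarrow> length x \<le> length y"
  shows "C s s' = 0 \<Longrightarrow> k \<le> 1" and "C s s' = -1 \<Longrightarrow> k \<le> 2"
proof -
  assume "C s s' = 0"
  show "k \<le> 1"
  proof (rule ccontr)
    assume "\<not> k \<le> 1"
    then obtain k' where "k = Suc (Suc k')" by (intro that[of "k - 2"]) simp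
    then obtain t where x: "x = s' # s # t" "set t \<subseteq> {s, s'}"
      using assms(3) set_alternating[of s' s k'] by auto
    have "word_act C l (s' # t) = word_act C l (s # x)"
      using x word_act_commute[OF assms(1,2) \<open>C s s' = 0\<close>] word_act_cancel_square[of s "[s']" t] assms(1)
      by simp
    then show False using shortest_s[of "s' # t"] x by auto
  qed
next
  assume "C s s' = -1"
  show "k \<le> 2"
  proof (rule ccontr)
    assume "\<not> k \<le> 2"
    then obtain k' where "k = Suc (Suc (Suc k'))" by (intro that[of "k - 3"]) simp
    then obtain t where x: "x = s' # s # s' # t" "set t \<subseteq> {s, s'}"
      using assms(3) set_alternating[of s s' k'] by auto
    have "word_act C l (s' # s # t) = word_act C l (s # x)"
      using x word_act_braid[OF assms(1,2) \<open>C s s' = -1\<close>] word_act_cancel_square[of s' "[s', s]" t] assms(2)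
      by simp
    then show False using shortest_s[of "s' # s # t"] x by auto
  qed
qed

lemma dihedral_nonneg:
  assumes "s \<le> l" "s' \<le> l" "s \<noteq> s'" "set x \<subseteq> {s, s'}"
    and shortest: "\<And>y. set y \<subseteq> {s, s'} \<Longrightarrow> word_act C l y = word_act C l x \<Longrightarrow> length x \<le> length y"
    and shortest_s: "\<And>y. set y \<subseteq> {s, s'} \<Longrightarrow> word_act C l y = word_act C l (s # x) \<Longrightarrow> length x \<le> length y"
  obtains p q where "0 \<le> p" "0 \<le> q" "word_act C l x (alpha s) = alpha2 s s' p q"
proof -
  define k where "k = length x"
  have x: "x = alternating s' s k"
    unfolding k_def using dihedral_word_alternating[OF assms(1,2,4) shortest shortest_s] .
  note bound = dihedral_length_bound[OF assms(1,2) x shortest_s]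
  note steps = word_act_Cons word_act_Nil refl_alpha2_left[OF assms(1-3)] refl_alpha2_right[OF assms(1-3)]
  consider "C s s' = 0" | "C s s' = -1" | "C s s' \<le> -2"
    using off_diag_nonpos[OF assms(1-3)] by linarith
  then show ?thesis
  proof cases
    case 1
    then have "k = 0 \<or> k = 1" using bound(1) by auto
    then have "word_act C l x (alpha s) = alpha2 s s' 1 0"
      using 1 by (auto simp: x alpha_eq_alpha2[of s s'] steps)
    then show ?thesis using that[of 1 0] by simp
  next
    case 2
    then have "k = 0 \<or> k = 1 \<or> k = 2" using bound(2) by auto
    then have "word_act C l x (alpha s) \<in> {alpha2 s s' 1 0, alpha2 s s' 1 1, alpha2 s s' 0 1}"
      using 2 by (auto simp: x alpha_eq_alpha2[of s s'] steps numeral_2_eq_2)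
    then show ?thesis using that[of 1 0] that[of 1 1] that[of 0 1] by auto
  next
    case 3
    then show ?thesis
      using word_act_alternating_alpha2[OF assms(1-3) 3, of 0 1 k] that x alpha_eq_alpha2[of s s'] by auto
  qed
qed

text \<open>Writing \<open>w = v x\<close> with \<open>x\<close> in the parabolic subgroup \<open>\<langle>r\<^sub>s, r\<^sub>s'\<rangle>\<close>, lengths adding up,
  and \<open>\<ell>(v)\<close> minimal, makes \<open>v\<close> shortest in its coset \<open>v \<langle>r\<^sub>s, r\<^sub>s'\<rangle>\<close>.\<close>
lemma rank2_factorization:
  assumes ws: "set ws \<subseteq> {0..l}" and s: "s \<le> l" and s': "s' \<le> l"
    and descent: "wlen (word_act C l (s' # ws)) < wlen (word_act C l ws)"
  obtains vs x where "set vs \<subseteq> {0..l}" "set x \<subseteq> {s, s'}" "word_act C l (x @ vs) = word_act C l ws"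
    "wlen (word_act C l vs) + length x = wlen (word_act C l ws)"
    "wlen (word_act C l vs) < wlen (word_act C l ws)"
    "\<And>t. t \<in> {s, s'} \<Longrightarrow> wlen (word_act C l vs) \<le> wlen (word_act C l (t # vs))"
proof -
  define n where "n = wlen (word_act C l ws)"
  define P where "P = (\<lambda>(vs, x). set vs \<subseteq> {0..l} \<and> set x \<subseteq> {s, s'} \<and>
    word_act C l (x @ vs) = word_act C l ws \<and> wlen (word_act C l vs) + length x = n)"
  obtain rest where rest: "set rest \<subseteq> {0..l}" "length rest = wlen (word_act C l (s' # ws))"
    "word_act C l rest = word_act C l (s' # ws)"
    using obtain_shortest_word[of "s' # ws"] ws s' by auto
  have "word_act C l ([s'] @ rest) = word_act C l ws"
    using rest(3) word_act_cancel_square[OF s', of "[]" ws] by (simp add: word_act_Cons_comp)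
  moreover have "wlen (word_act C l rest) + 1 = n"
    using wlen_le[OF rest(1)] wlen_Cons_le[OF ws s'] rest descent n_def by simp
  ultimately have P0: "P (rest, [s'])" using rest(1) unfolding P_def by simp
  obtain vx where Pvx: "P vx" and least: "\<And>y. P y \<Longrightarrow> wlen (word_act C l (fst vx)) \<le> wlen (word_act C l (fst y))"
    using ex_has_least_nat[of P "(rest, [s'])" "\<lambda>p. wlen (word_act C l (fst p))"] P0 by blast
  obtain vs x where vx: "vx = (vs, x)" by fastforce
  have vs: "set vs \<subseteq> {0..l}" and x: "set x \<subseteq> {s, s'}" and eq: "word_act C l (x @ vs) = word_act C l ws"
    and len: "wlen (word_act C l vs) + length x = n" using Pvx vx unfolding P_def by auto
  have x0: "set x \<subseteq> {0..l}" using x s s' by auto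
  have shorter: "wlen (word_act C l vs) < n" using least[OF P0] vx P0 unfolding P_def by fastforce
  have coset_min: "wlen (word_act C l vs) \<le> wlen (word_act C l (t # vs))" if t: "t \<in> {s, s'}" for t
  proof (rule ccontr)
    assume shortens: "\<not> wlen (word_act C l vs) \<le> wlen (word_act C l (t # vs))"
    have "t \<le> l" using t s s' by auto
    then have eq': "word_act C l ((x @ [t]) @ (t # vs)) = word_act C l ws"
      using word_act_cancel_square[of t x vs] eq by simp
    have "n \<le> wlen (word_act C l (x @ [t])) + wlen (word_act C l (t # vs))"
      using wlen_append_le[of "x @ [t]" "t # vs"] eq' n_def x0 vs \<open>t \<le> l\<close> by auto
    moreover have "wlen (word_act C l (x @ [t])) \<le> length x + 1"
      using wlen_le[of "x @ [t]"] x0 \<open>t \<le> l\<close> by auto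
    ultimately have "P (t # vs, x @ [t])"
      unfolding P_def using vs x t \<open>t \<le> l\<close> eq' shortens len by auto
    then show False using least vx shortens by fastforce
  qed
  show ?thesis using that[OF vs x eq len[unfolded n_def] shorter[unfolded n_def] coset_min] .
qed

lemma rank2_reduction:
  assumes ws: "set ws \<subseteq> {0..l}" and s: "s \<le> l" and s': "s' \<le> l" "s \<noteq> s'"
    and descent: "wlen (word_act C l (s' # ws)) < wlen (word_act C l ws)"
    and ascent: "wlen (word_act C l ws) \<le> wlen (word_act C l (s # ws))"
  obtains vs p q where "set vs \<subseteq> {0..l}" "wlen (word_act C l vs) < wlen (word_act C l ws)"
    "\<And>t. t \<in> {s, s'} \<Longrightarrow> wlen (word_act C l vs) \<le> wlen (word_act C l (t # vs))"
    "0 \<le> p" "0 \<le> q"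
    "word_act C l ws (alpha s) = (\<lambda>b. p * word_act C l vs (alpha s) b + q * word_act C l vs (alpha s') b)"
proof -
  obtain vs x where vs: "set vs \<subseteq> {0..l}" and x: "set x \<subseteq> {s, s'}"
    and eq: "word_act C l (x @ vs) = word_act C l ws"
    and len: "wlen (word_act C l vs) + length x = wlen (word_act C l ws)"
    and shorter: "wlen (word_act C l vs) < wlen (word_act C l ws)"
    and coset_min: "\<And>t. t \<in> {s, s'} \<Longrightarrow> wlen (word_act C l vs) \<le> wlen (word_act C l (t # vs))"
    using rank2_factorization[OF ws s s'(1) descent] by blast
  have length_le: "length x \<le> length y"
    if y: "set y \<subseteq> {s, s'}" and "wlen (word_act C l ws) \<le> wlen (word_act C l (y @ vs))" for y
  proof -
    have "set y \<subseteq> {0..l}" using y s s' by auto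
    then show ?thesis using that wlen_append_le[OF _ vs, of y] wlen_le[of y] len by fastforce
  qed
  obtain p q where "0 \<le> p" "0 \<le> q" "word_act C l x (alpha s) = alpha2 s s' p q"
  proof (rule dihedral_nonneg[OF s s' x])
    show "length x \<le> length y" if "set y \<subseteq> {s, s'}" "word_act C l y = word_act C l x" for y
      using length_le[of y] that eq by (simp add: word_act_append)
    show "length x \<le> length y" if "set y \<subseteq> {s, s'}" "word_act C l y = word_act C l (s # x)" for y
    proof -
      have "word_act C l (y @ vs) = word_act C l (s # ws)"
        using that(2) eq by (simp add: word_act_append word_act_Cons_comp) (metis comp_assoc)
      then show ?thesis using length_le[OF that(1)] ascent by simp
    qed
  qed
  moreover have "word_act C l ws (alpha s) = word_act C l vs (word_act C l x (alpha s))"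
    using eq[symmetric] by (simp add: word_act_append)
  ultimately show ?thesis
    using that[OF vs shorter coset_min] by (simp add: alpha2_def word_act_lincomb)
qed

text \<open>Kac, Lemma 3.11. The word \<open>s # ws\<close> denotes \<open>w r\<^sub>s\<close>, as its first letter acts first.\<close>
lemma nonneg_if_wlen_le_Cons:
  assumes "set ws \<subseteq> {0..l}" "s \<le> l" "wlen (word_act C l ws) \<le> wlen (word_act C l (s # ws))"
  shows "nonneg_weight (word_act C l ws (alpha s))"
  using assms
proof (induction "wlen (word_act C l ws)" arbitrary: ws s rule: less_induct)
  case less
  note ws = less.prems(1) and s = less.prems(2)
  show ?case
  proof (cases "wlen (word_act C l ws) = 0")
    case True
    then have "word_act C l ws = id"
      using obtain_shortest_word[OF ws] word_act_Nil by (metis length_0_conv)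
    then show ?thesis by (simp add: nonneg_weight_def alpha_def)
  next
    case False
    obtain s' where s': "s' \<le> l" "wlen (word_act C l (s' # ws)) < wlen (word_act C l ws)"
      using exists_descent[OF ws False] .
    have "s \<noteq> s'" using less.prems(3) s' by auto
    obtain vs p q where vs: "set vs \<subseteq> {0..l}" and shorter: "wlen (word_act C l vs) < wlen (word_act C l ws)"
      and coset_min: "\<And>t. t \<in> {s, s'} \<Longrightarrow> wlen (word_act C l vs) \<le> wlen (word_act C l (t # vs))"
      and "0 \<le> p" "0 \<le> q"
      and comb: "word_act C l ws (alpha s) = (\<lambda>b. p * word_act C l vs (alpha s) b + q * word_act C l vs (alpha s') b)"
      using rank2_reduction[OF ws s s'(1) \<open>s \<noteq> s'\<close> s'(2) less.prems(3)] by blast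
    have "nonneg_weight (word_act C l vs (alpha t))" if "t \<in> {s, s'}" for t
    proof -
      have t: "t \<le> l" using that s s' by auto
      show ?thesis by (rule less.hyps[OF shorter vs t coset_min[OF that]])
    qed
    then show ?thesis using comb \<open>0 \<le> p\<close> \<open>0 \<le> q\<close> by (simp add: nonneg_weight_def)
  qed
qed

lemma word_act_uminus: "word_act C l ws (\<lambda>b. - \<mu> b) = (\<lambda>b. - word_act C l ws \<mu> b)"
  using word_act_lincomb[of ws "-1" \<mu> 0 \<mu>] by simp

text \<open>The pairing \<open>\<langle>w\<Lambda>\<^sub>0, \<alpha>\<^sub>j\<^sup>\<or>\<rangle>\<close> is the \<open>\<alpha>\<^sub>0\<close>-coefficient of \<open>w\<^sup>-\<^sup>1\<alpha>\<^sub>j\<close>, so its sign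
  decides whether \<open>r\<^sub>j w\<close> is longer or shorter than \<open>w\<close>.\<close>
lemma wlen_snoc_less_if_pair_neg:
  assumes us: "set us \<subseteq> {0..l}" and j: "j \<le> l" and neg: "pair C l (word_act C l us Lambda0) j < 0"
  shows "wlen (word_act C l (us @ [j])) < wlen (word_act C l us)"
proof -
  have "\<not> nonneg_weight (word_act C l (rev us) (alpha j))"
    using pair_word_act_Lambda0[OF us j] neg unfolding nonneg_weight_def not_all
    by (intro exI[of _ "Alpha 0"]) simp
  then have "wlen (word_act C l (j # rev us)) < wlen (word_act C l (rev us))"
    using nonneg_if_wlen_le_Cons[of "rev us" j] us j by force
  then show ?thesis using wlen_rev[of "us @ [j]"] wlen_rev[OF us] us j by simp
qed

lemma wlen_snoc_greater_if_pair_pos: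
  assumes us: "set us \<subseteq> {0..l}" and j: "j \<le> l" and pos: "pair C l (word_act C l us Lambda0) j > 0"
  shows "wlen (word_act C l us) < wlen (word_act C l (us @ [j]))"
proof (rule ccontr)
  assume "\<not> ?thesis"
  then have "wlen (word_act C l (j # rev us)) \<le> wlen (word_act C l (j # j # rev us))"
    using wlen_rev[of "us @ [j]"] wlen_rev[OF us] word_act_cancel_square[OF j, of "[]" "rev us"] us j by simp
  then have "nonneg_weight (word_act C l (j # rev us) (alpha j))"
    using nonneg_if_wlen_le_Cons[of "j # rev us" j] us j by simp
  moreover have "word_act C l (j # rev us) (alpha j) = (\<lambda>b. - word_act C l (rev us) (alpha j) b)"
    by (simp add: word_act_Cons refl_alpha_self[OF j] word_act_uminus)
  ultimately show False
    using pair_word_act_Lambda0[OF us j] pos unfolding nonneg_weight_def by (metis neg_0_le_iff_le not_le)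
qed

section \<open>Minuscule words\<close>

definition minuscule_path :: "nat list \<Rightarrow> bool" where
  "minuscule_path ws \<longleftrightarrow> set ws \<subseteq> {0..l} \<and>
     (\<forall>k<length ws. pair C l (word_act C l (take k ws) Lambda0) (ws ! k) = 1)"

lemma minuscule_path_snoc:
  "minuscule_path (ws @ [j]) \<longleftrightarrow> minuscule_path ws \<and> j \<le> l \<and> pair C l (word_act C l ws Lambda0) j = 1"
  unfolding minuscule_path_def by (auto simp: nth_append less_Suc_eq)

lemma wlen_minuscule_path: "minuscule_path ws \<Longrightarrow> wlen (word_act C l ws) = length ws"
proof (induction ws rule: rev_induct)
  case Nil
  then show ?case using wlen_le[of "[]"] by simp
next
  case (snoc j ws)
  then have m: "minuscule_path ws" and j: "j \<le> l" and p: "pair C l (word_act C l ws Lambda0) j = 1"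
    by (auto simp: minuscule_path_snoc)
  then have ws: "set ws \<subseteq> {0..l}" by (simp add: minuscule_path_def)
  show ?case
    using wlen_snoc_greater_if_pair_pos[OF ws j] p wlen_le[of "ws @ [j]"] ws j snoc.IH[OF m] by simp
qed

lemma reduced_word_if_minuscule_path: "minuscule_path ws \<Longrightarrow> reduced_word C l ws"
  unfolding reduced_word_def using wlen_le wlen_minuscule_path by (metis minuscule_path_def)

definition height :: "weight \<Rightarrow> int" where
  "height \<mu> = (\<Sum>k\<le>l. \<mu> (Alpha k))"

lemma height_refl: "j \<le> l \<Longrightarrow> height (refl C l j \<mu>) = height \<mu> - pair C l \<mu> j"
  unfolding height_def refl_apply using sum_atMost_indicator'[of j "\<lambda>_. pair C l \<mu> j"]
  by (simp add: sum_subtractf alpha_def)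

lemma height_minuscule_path: "minuscule_path ws \<Longrightarrow> height (word_act C l ws Lambda0) = - int (length ws)"
proof (induction ws rule: rev_induct)
  case Nil
  then show ?case by (simp add: word_act_Nil height_def Lambda0_def)
next
  case (snoc j ws)
  then show ?case using height_refl by (simp add: minuscule_path_snoc word_act_snoc)
qed

text \<open>Induction on the path \<open>ws\<close>: its last letter \<open>j\<close> also shortens \<open>us\<close>, because the common
  image of \<open>\<Lambda>\<^sub>0\<close> pairs to \<open>-1\<close> with \<open>\<alpha>\<^sub>j\<^sup>\<or>\<close>.\<close>
lemma word_act_eq_if_short_and_same_Lambda0:
  assumes "minuscule_path ws" "set us \<subseteq> {0..l}" "word_act C l us Lambda0 = word_act C l ws Lambda0"
    and "wlen (word_act C l us) \<le> length ws"
  shows "word_act C l us = word_act C l ws"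
  using assms
proof (induction ws arbitrary: us rule: rev_induct)
  case Nil
  then obtain vs where "length vs = 0" "word_act C l vs = word_act C l us"
    using obtain_shortest_word[of us] by fastforce
  then show ?case by simp
next
  case (snoc j ws)
  then have m: "minuscule_path ws" and j: "j \<le> l" and p: "pair C l (word_act C l ws Lambda0) j = 1"
    and us: "set us \<subseteq> {0..l}"
    by (auto simp: minuscule_path_snoc)
  have "pair C l (word_act C l us Lambda0) j = -1"
    using snoc.prems(3) pair_refl[OF j, of "word_act C l ws Lambda0" j] p diag[OF j] by (simp add: word_act_snoc)
  then have "wlen (word_act C l (us @ [j])) \<le> length ws"
    using wlen_snoc_less_if_pair_neg[OF us j] snoc.prems(4) by simp
  moreover have "word_act C l (us @ [j]) Lambda0 = word_act C l ws Lambda0"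
    using snoc.prems(3) by (simp add: word_act_snoc refl_refl[OF j])
  ultimately have "word_act C l (us @ [j]) = word_act C l ws"
    using snoc.IH[OF m] us j by simp
  then have "word_act C l ((us @ [j]) @ [j]) = word_act C l (ws @ [j])"
    by (simp only: word_act_append)
  then show ?case using word_act_cancel_square[OF j, of us "[]"] by simp
qed

lemma minuscule_path_unique:
  assumes "minuscule_path ws" "minuscule_path vs" "word_act C l vs Lambda0 = word_act C l ws Lambda0"
  shows "word_act C l vs = word_act C l ws"
proof (rule word_act_eq_if_short_and_same_Lambda0[OF assms(1) _ assms(3)])
  show "set vs \<subseteq> {0..l}" using assms(2) by (simp add: minuscule_path_def)
  show "wlen (word_act C l vs) \<le> length ws"
    using height_minuscule_path[OF assms(1)] height_minuscule_path[OF assms(2)] assms(3)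
      wlen_minuscule_path[OF assms(2)] by simp
qed

lemma minuscule_Lambda0_iff: "minuscule C l Lambda0 w \<longleftrightarrow> (\<exists>ws. minuscule_path ws \<and> w = word_act C l ws)"
  unfolding minuscule_def minuscule_path_def
  using reduced_word_if_minuscule_path[unfolded minuscule_path_def] by (auto simp: reduced_word_def)

end

section \<open>Symmetric matrices of affine type\<close>

lemma fin_roots_iff:
  "\<beta> \<in> fin_roots C J \<longleftrightarrow> (\<exists>ws m. \<beta> = fold (fin_refl C J) ws (unitv m) \<and> set ws \<subseteq> J \<and> m \<in> J)"
  unfolding fin_roots_def by blast

lemma indecomposable_connected:
  assumes "indecomposable C {0..l}"
    and edge: "\<And>k m. k \<le> l \<Longrightarrow> m \<le> l \<Longrightarrow> C k m \<noteq> 0 \<Longrightarrow> z k = z m"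
    and "k \<le> l"
  shows "z k = z 0"
proof (rule ccontr)
  assume "z k \<noteq> z 0"
  define A where "A = {m\<in>{0..l}. z m = z 0}"
  define B where "B = {m\<in>{0..l}. z m \<noteq> z 0}"
  have "0 \<in> A" "k \<in> B" using \<open>z k \<noteq> z 0\<close> \<open>k \<le> l\<close> by (auto simp: A_def B_def)
  moreover have "A \<inter> B = {}" "A \<union> B = {0..l}" by (auto simp: A_def B_def)
  moreover have "\<forall>p\<in>A. \<forall>q\<in>B. C p q = 0" using edge by (force simp: A_def B_def)
  ultimately show False using assms(1) unfolding indecomposable_def by blast
qed

text \<open>\<open>\<theta>\<close> is the highest root of the finite root system on \<open>I'\<close>, and \<open>C_col0\<close> encodes
  \<open>\<alpha>\<^sub>0 = \<delta> - \<theta>\<close>; \<open>a\<close> is a positive real vector spanning the kernel of \<open>C\<close>.\<close>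
locale symmetric_affine = symmetric_gcm +
  fixes \<theta> :: "nat \<Rightarrow> int" and a :: "nat \<Rightarrow> real"
  assumes indecomposable: "indecomposable C {0..l}"
    and null_pos: "\<And>k. k \<le> l \<Longrightarrow> a k > 0"
    and null: "\<And>k. k \<le> l \<Longrightarrow> (\<Sum>m\<le>l. real_of_int (C k m) * a m) = 0"
    and null_unique: "\<And>v. (\<And>k. k \<le> l \<Longrightarrow> (\<Sum>m\<le>l. real_of_int (C k m) * v m) = 0) \<Longrightarrow> \<exists>c. \<forall>k\<le>l. v k = c * a k"
    and theta_root: "\<theta> \<in> fin_roots C {1..l}"
    and theta_highest: "\<And>\<beta> j. \<beta> \<in> fin_roots C {1..l} \<Longrightarrow> j \<in> {1..l} \<Longrightarrow> \<beta> j \<le> \<theta> j"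
    and C_col0: "\<And>j. j \<in> {1..l} \<Longrightarrow> C j 0 = - (\<Sum>k\<in>{1..l}. C j k * \<theta> k)"
begin

definition qform :: "(nat \<Rightarrow> real) \<Rightarrow> real" where
  "qform y = (\<Sum>k\<le>l. \<Sum>m\<le>l. real_of_int (C k m) * y k * y m)"

text \<open>Since \<open>C a = 0\<close>, the quadratic form is \<open>-1/2\<close> times a sum of squares weighted by
  the off-diagonal entries \<open>C k m \<le> 0\<close>.\<close>
lemma qform_sum_squares:
  "qform y = - (\<Sum>k\<le>l. \<Sum>m\<le>l. real_of_int (C k m) * a k * a m * (y k / a k - y m / a m)^2) / 2"
proof -
  define c where "c k m = real_of_int (C k m)" for k m
  have expand: "c k m * a k * a m * (y k / a k - y m / a m)^2 =
      (y k^2 / a k) * (c k m * a m) - 2 * (c k m * y k * y m) + (y m^2 / a m) * (c m k * a k)"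
    if "k \<le> l" "m \<le> l" for k m
    using null_pos[OF that(1)] null_pos[OF that(2)] symmetric[OF that]
    by (simp add: c_def field_simps power2_eq_square)
  have vanish: "(\<Sum>k\<le>l. \<Sum>m\<le>l. (y k^2 / a k) * (c k m * a m)) = 0" for y
  proof -
    have "(\<Sum>k\<le>l. \<Sum>m\<le>l. (y k^2 / a k) * (c k m * a m)) = (\<Sum>k\<le>l. (y k^2 / a k) * (\<Sum>m\<le>l. c k m * a m))"
      by (simp only: sum_distrib_left)
    also have "\<dots> = 0" by (intro sum.neutral) (simp add: c_def null)
    finally show ?thesis .
  qed
  have vanish': "(\<Sum>k\<le>l. \<Sum>m\<le>l. (y m^2 / a m) * (c m k * a k)) = 0"
    by (subst sum.swap) (rule vanish)
  have "(\<Sum>k\<le>l. \<Sum>m\<le>l. c k m * a k * a m * (y k / a k - y m / a m)^2)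
      = (\<Sum>k\<le>l. \<Sum>m\<le>l. (y k^2 / a k) * (c k m * a m) - 2 * (c k m * y k * y m) + (y m^2 / a m) * (c m k * a k))"
    by (intro sum.cong refl) (simp add: expand)
  also have "\<dots> = (\<Sum>k\<le>l. \<Sum>m\<le>l. (y k^2 / a k) * (c k m * a m)) - 2 * (\<Sum>k\<le>l. \<Sum>m\<le>l. c k m * y k * y m)
        + (\<Sum>k\<le>l. \<Sum>m\<le>l. (y m^2 / a m) * (c m k * a k))"
    by (simp only: sum.distrib sum_subtractf sum_distrib_left)
  finally show ?thesis using vanish[of y] vanish' unfolding qform_def c_def by simp
qed

lemma weighted_square_nonpos:
  assumes "k \<le> l" "m \<le> l"
  shows "real_of_int (C k m) * a k * a m * (y k / a k - y m / a m)^2 \<le> 0"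
proof (cases "k = m")
  case False
  have "real_of_int (C k m) * (a k * a m * (y k / a k - y m / a m)^2) \<le> 0"
    using off_diag_nonpos[OF assms False] null_pos[OF assms(1)] null_pos[OF assms(2)]
    by (intro mult_nonpos_nonneg) simp_all
  then show ?thesis by (simp add: mult.assoc)
qed simp

lemma qform_nonneg: "0 \<le> qform y"
proof -
  have "(\<Sum>k\<le>l. \<Sum>m\<le>l. real_of_int (C k m) * a k * a m * (y k / a k - y m / a m)^2) \<le> 0"
    by (intro sum_nonpos) (simp add: weighted_square_nonpos)
  then show ?thesis unfolding qform_sum_squares by simp
qed

lemma qform_eq_0_imp_proportional:
  assumes "qform y = 0" "k \<le> l"
  shows "y k = (y 0 / a 0) * a k"
proof -
  define T where "T k m = - real_of_int (C k m) * a k * a m * (y k / a k - y m / a m)^2" for k m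
  have T_nonneg: "0 \<le> T k m" if "k \<le> l" "m \<le> l" for k m
    using weighted_square_nonpos[OF that, of y] by (simp add: T_def)
  have "(\<Sum>k\<le>l. \<Sum>m\<le>l. T k m) = 0"
    using assms(1) unfolding qform_sum_squares T_def by (simp add: sum_negf)
  moreover have row_nonneg: "0 \<le> (\<Sum>m\<le>l. T k m)" if "k \<le> l" for k
    using T_nonneg[OF that] by (intro sum_nonneg) simp
  ultimately have "(\<Sum>m\<le>l. T k m) = 0" if "k \<le> l" for k
    using sum_nonneg_eq_0_iff[of "{..l}" "\<lambda>k. \<Sum>m\<le>l. T k m"] that by simp
  then have T0: "T k m = 0" if "k \<le> l" "m \<le> l" for k m
    using sum_nonneg_eq_0_iff[of "{..l}" "T k"] T_nonneg[OF that(1)] that by simp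
  have "y k / a k = y m / a m" if "k \<le> l" "m \<le> l" "C k m \<noteq> 0" for k m
    using T0[OF that(1,2)] that(3) null_pos[OF that(1)] null_pos[OF that(2)] by (simp add: T_def)
  then have "y k / a k = y 0 / a 0"
    using indecomposable_connected[OF indecomposable _ assms(2), of "\<lambda>k. y k / a k"] by blast
  then show ?thesis using null_pos[OF assms(2)] by (simp add: field_simps)
qed

definition lift :: "(nat \<Rightarrow> int) \<Rightarrow> weight" where
  "lift x = (\<lambda>b. case b of Alpha k \<Rightarrow> if k \<in> {1..l} then x k else 0 | Lam0 \<Rightarrow> 0)"

lemma lift_Alpha [simp]: "lift x (Alpha k) = (if k \<in> {1..l} then x k else 0)"
  and lift_Lam0 [simp]: "lift x Lam0 = 0"
  by (simp_all add: lift_def)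

lemma sum_atMost_restrict: "(\<Sum>k\<le>l. if k \<in> {1..l} then f k else (0::int)) = (\<Sum>k\<in>{1..l}. f k)"
proof -
  have "(\<Sum>k\<le>l. if k \<in> {1..l} then f k else (0::int)) = sum f ({..l} \<inter> {1..l})"
    by (rule sum.inter_restrict[symmetric]) simp
  also have "{..l} \<inter> {1..l} = {1..l}" by auto
  finally show ?thesis .
qed

lemma pair_lift: "pair C l (lift x) j = (\<Sum>k\<in>{1..l}. C j k * x k)"
proof -
  have "pair C l (lift x) j = (\<Sum>k\<le>l. if k \<in> {1..l} then C j k * x k else 0)"
    unfolding pair_def by (auto intro!: sum.cong)
  then show ?thesis by (simp only: sum_atMost_restrict)
qed

lemma form_lift: "form \<mu> (lift x) = (\<Sum>k\<in>{1..l}. x k * pair C l \<mu> k)"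
proof -
  have "form \<mu> (lift x) = (\<Sum>k\<le>l. if k \<in> {1..l} then x k * pair C l \<mu> k else 0)"
    unfolding form_def by (auto intro!: sum.cong)
  then show ?thesis by (simp only: sum_atMost_restrict)
qed

lemma lift_lincomb: "lift (\<lambda>k. p * x k + q * y k) = (\<lambda>b. p * lift x b + q * lift y b)"
  by (auto simp: fun_eq_iff lift_def split: wbasis.split)

lemma lift_unitv: "m \<in> {1..l} \<Longrightarrow> lift (unitv m) = alpha m"
  by (auto simp: fun_eq_iff lift_def unitv_def alpha_def split: wbasis.split)

lemma refl_lift:
  assumes "j \<in> {1..l}" shows "refl C l j (lift x) = lift (fin_refl C {1..l} j x)"
proof
  fix b
  show "refl C l j (lift x) b = lift (fin_refl C {1..l} j x) b"
    using assms by (cases b) (auto simp: refl_apply pair_lift fin_refl_def alpha_def)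
qed

lemma lift_fold_fin_refl:
  "set ws \<subseteq> {1..l} \<Longrightarrow> lift (fold (fin_refl C {1..l}) ws v) = word_act C l ws (lift v)"
  by (induction ws arbitrary: v) (simp_all add: word_act_Nil word_act_Cons refl_lift)

lemma fin_refl_fin_root:
  assumes "\<beta> \<in> fin_roots C {1..l}" "j \<in> {1..l}"
  shows "fin_refl C {1..l} j \<beta> \<in> fin_roots C {1..l}"
proof -
  obtain ws m where "\<beta> = fold (fin_refl C {1..l}) ws (unitv m)" "set ws \<subseteq> {1..l}" "m \<in> {1..l}"
    using assms(1) unfolding fin_roots_iff by blast
  then show ?thesis unfolding fin_roots_iff using assms(2) by (intro exI[of _ "ws @ [j]"] exI[of _ m]) auto
qed

lemma unitv_fin_root: "m \<in> {1..l} \<Longrightarrow> unitv m \<in> fin_roots C {1..l}"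
  unfolding fin_roots_iff by (intro exI[of _ "[]"] exI[of _ m]) auto

lemma fin_root_eq_0_outside:
  assumes "\<beta> \<in> fin_roots C {1..l}" "k \<notin> {1..l}"
  shows "\<beta> k = 0"
proof -
  have "fold (fin_refl C {1..l}) ws v k = 0"
    if "set ws \<subseteq> {1..l}" "\<forall>k. k \<notin> {1..l} \<longrightarrow> v k = 0" for ws v
    using that assms(2) by (induction ws arbitrary: v) (auto simp: fin_refl_def)
  then show ?thesis using assms unfolding fin_roots_iff by (auto simp: unitv_def)
qed

lemma form_lift_fin_root: "\<beta> \<in> fin_roots C {1..l} \<Longrightarrow> form (lift \<beta>) (lift \<beta>) = 2"
proof -
  assume "\<beta> \<in> fin_roots C {1..l}"
  then obtain ws m where h: "\<beta> = fold (fin_refl C {1..l}) ws (unitv m)" "set ws \<subseteq> {1..l}" "m \<in> {1..l}"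
    unfolding fin_roots_iff by blast
  then have "lift \<beta> = word_act C l ws (alpha m)" using lift_fold_fin_refl lift_unitv by simp
  moreover have "set ws \<subseteq> {0..l}" using h(2) by auto
  ultimately have "form (lift \<beta>) (lift \<beta>) = form (alpha m) (alpha m)" by (simp add: form_word_act_self)
  then show ?thesis using h(3) by (simp add: form_alpha pair_alpha diag)
qed

lemma form_lift_self: "real_of_int (form (lift x) (lift x)) = qform (\<lambda>k. real_of_int (lift x (Alpha k)))"
  unfolding form_expand qform_def by (simp add: ac_simps)

lemma form_lift_self_nonneg: "0 \<le> form (lift x) (lift x)"
proof -
  have "0 \<le> real_of_int (form (lift x) (lift x))" using form_lift_self[of x] qform_nonneg by simp
  then show ?thesis by simp
qed

lemma form_lift_self_eq_0:
  assumes "form (lift x) (lift x) = 0" "k \<in> {1..l}"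
  shows "x k = 0"
  using qform_eq_0_imp_proportional[of "\<lambda>k. real_of_int (lift x (Alpha k))" k] assms form_lift_self[of x]
  by simp

section \<open>The highest root and the null root\<close>

lemma theta_pos: "k \<in> {1..l} \<Longrightarrow> 1 \<le> \<theta> k"
  using theta_highest[OF unitv_fin_root, of k k] by (simp add: unitv_def)

lemma pair_lift_theta: "j \<in> {1..l} \<Longrightarrow> pair C l (lift \<theta>) j = - C j 0"
  using C_col0 by (simp add: pair_lift)

lemma theta_dominant: "j \<in> {1..l} \<Longrightarrow> 0 \<le> pair C l (lift \<theta>) j"
  using pair_lift_theta off_diag_nonpos[of j 0] by simp

lemma form_lift_theta: "form (lift \<theta>) (lift \<theta>) = 2"
  using form_lift_fin_root[OF theta_root] .

text \<open>A positive root \<open>\<beta>\<close> of the finite root system with \<open>\<langle>\<beta>, \<alpha>\<^sub>j\<^sup>\<or>\<rangle> \<ge> 0\<close> for all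
  \<open>j \<in> I'\<close> is \<open>\<theta>\<close>: both \<open>(\<theta>|\<theta> - \<beta>)\<close> and \<open>(\<beta>|\<theta> - \<beta>)\<close> are \<open>\<ge> 0\<close> and sum to
  \<open>(\<theta>|\<theta>) - (\<beta>|\<beta>) = 0\<close>, so \<open>(\<theta> - \<beta>|\<theta> - \<beta>) = 0\<close>.\<close>
lemma dominant_fin_root_eq_theta:
  assumes root: "\<beta> \<in> fin_roots C {1..l}"
    and dominant: "\<And>j. j \<in> {1..l} \<Longrightarrow> 0 \<le> pair C l (lift \<beta>) j"
  shows "\<beta> = \<theta>"
proof -
  define d where "d k = 1 * \<theta> k + (-1) * \<beta> k" for k
  have lift_d: "lift d = (\<lambda>b. 1 * lift \<theta> b + (-1) * lift \<beta> b)" unfolding d_def by (rule lift_lincomb)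
  have d_nonneg: "0 \<le> d k" if "k \<in> {1..l}" for k using theta_highest[OF root that] by (simp add: d_def)
  have "0 \<le> form (lift \<theta>) (lift d)" "0 \<le> form (lift \<beta>) (lift d)"
    unfolding form_lift using d_nonneg dominant theta_dominant by (auto intro!: sum_nonneg)
  moreover have "form (lift \<theta>) (lift d) = form (lift \<theta>) (lift \<theta>) - form (lift \<theta>) (lift \<beta>)"
    "form (lift \<beta>) (lift d) = form (lift \<beta>) (lift \<theta>) - form (lift \<beta>) (lift \<beta>)"
    unfolding lift_d by (simp_all only: form_lincomb_right; simp)+
  moreover have "form (lift d) (lift d) = form (lift \<theta>) (lift d) - form (lift \<beta>) (lift d)"
    by (subst (1) lift_d) (simp only: form_lincomb_left; simp)
  ultimately have "form (lift d) (lift d) = 0"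
    using form_lift_theta form_lift_fin_root[OF root] form_sym[of "lift \<beta>" "lift \<theta>"] by linarith
  then have "d k = 0" if "k \<in> {1..l}" for k using form_lift_self_eq_0 that by blast
  then have "\<beta> k = \<theta> k" for k
    using fin_root_eq_0_outside[OF root, of k] fin_root_eq_0_outside[OF theta_root, of k]
    by (cases "k \<in> {1..l}") (simp_all add: d_def)
  then show ?thesis by (rule ext)
qed

text \<open>For a positive root \<open>\<beta>\<close> and \<open>j \<in> I'\<close>, \<open>0 \<le> (\<beta> + \<alpha>\<^sub>j|\<beta> + \<alpha>\<^sub>j) = 4 + 2\<langle>\<beta>, \<alpha>\<^sub>j\<^sup>\<or>\<rangle>\<close>,
  with equality excluded because \<open>\<beta> + \<alpha>\<^sub>j\<close> does not vanish.\<close>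
lemma pair_lift_pos_fin_root_ge:
  assumes root: "\<beta> \<in> fin_roots C {1..l}" and pos: "\<And>k. k \<in> {1..l} \<Longrightarrow> 0 \<le> \<beta> k"
    and j: "j \<in> {1..l}"
  shows "-1 \<le> pair C l (lift \<beta>) j"
proof -
  define p where "p = pair C l (lift \<beta>) j"
  define x where "x k = 1 * \<beta> k + 1 * unitv j k" for k
  have lift_x: "lift x = (\<lambda>b. 1 * lift \<beta> b + 1 * alpha j b)"
    unfolding x_def lift_lincomb lift_unitv[OF j] ..
  have jl: "j \<le> l" using j by simp
  have "form (lift x) (lift x) = form (lift \<beta>) (lift \<beta>) + form (lift \<beta>) (alpha j)
      + form (alpha j) (lift \<beta>) + form (alpha j) (alpha j)"
    unfolding lift_x by (simp only: form_lincomb_left form_lincomb_right; simp)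
  also have "\<dots> = 4 + 2 * p"
    using form_lift_fin_root[OF root] form_alpha[OF jl, of "lift \<beta>"] form_sym[of "alpha j" "lift \<beta>"]
      form_alpha[OF jl, of "alpha j"] pair_alpha[OF jl, of j] diag[OF jl] p_def by simp
  finally have form_x: "form (lift x) (lift x) = 4 + 2 * p" .
  moreover have "x j \<noteq> 0" using pos[OF j] by (simp add: x_def unitv_def)
  then have "p \<noteq> -2" using form_lift_self_eq_0[OF _ j, of x] form_x by auto
  then show ?thesis using form_lift_self_nonneg[of x] form_x p_def by simp
qed

definition delta_coeffs :: "nat \<Rightarrow> int" where
  "delta_coeffs k = (if k = 0 then 1 else if k \<le> l then \<theta> k else 0)"

lemma sum_atMost_split_0: "(\<Sum>j\<le>l. f j) = f 0 + (\<Sum>j\<in>{1..l}. f (j::nat))"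
proof -
  have "{..l} = insert 0 {1..l}" by auto
  then show ?thesis by simp
qed

text \<open>Row \<open>0\<close> of \<open>C \<delta> = 0\<close> is \<open>2 - (\<theta>|\<theta>) = 0\<close>; the other rows are the hypothesis on
  the column \<open>C j 0\<close>.\<close>
lemma C_delta_coeffs: assumes "i \<le> l" shows "(\<Sum>j\<le>l. C i j * delta_coeffs j) = 0"
proof -
  have "(\<Sum>j\<le>l. C i j * delta_coeffs j) = C i 0 + (\<Sum>j\<in>{1..l}. C i j * \<theta> j)"
    unfolding sum_atMost_split_0[of "\<lambda>j. C i j * delta_coeffs j"] by (auto intro!: sum.cong simp: delta_coeffs_def)
  also have "\<dots> = 0"
  proof (cases "i = 0")
    case True
    have "(\<Sum>j\<in>{1..l}. C 0 j * \<theta> j) = (\<Sum>j\<in>{1..l}. \<theta> j * (- pair C l (lift \<theta>) j))"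
      using symmetric[of 0] pair_lift_theta by (intro sum.cong) auto
    also have "\<dots> = - form (lift \<theta>) (lift \<theta>)" by (simp add: form_lift sum_negf)
    finally show ?thesis using True form_lift_theta diag[of 0] by simp
  next
    case False
    then show ?thesis using C_col0[of i] assms by simp
  qed
  finally show ?thesis .
qed

lemma null_vector_proportional:
  assumes "\<And>i. i \<le> l \<Longrightarrow> (\<Sum>j\<le>l. C i j * b j) = 0" "i \<le> l"
  shows "b i = b 0 * delta_coeffs i"
proof -
  have real_null: "(\<Sum>j\<le>l. real_of_int (C k j) * real_of_int (v j)) = 0"
    if "\<And>i. i \<le> l \<Longrightarrow> (\<Sum>j\<le>l. C i j * v j) = 0" "k \<le> l" for v k
  proof -
    have "real_of_int (\<Sum>j\<le>l. C k j * v j) = 0" using that by simp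
    then show ?thesis by simp
  qed
  obtain c1 where c1: "\<forall>k\<le>l. real_of_int (b k) = c1 * a k"
    using null_unique[of "\<lambda>k. real_of_int (b k)"] real_null[OF assms(1)] by blast
  obtain c2 where c2: "\<forall>k\<le>l. real_of_int (delta_coeffs k) = c2 * a k"
    using null_unique[of "\<lambda>k. real_of_int (delta_coeffs k)"] real_null[OF C_delta_coeffs] by blast
  have "c2 * a 0 = 1" using c2 by (auto simp: delta_coeffs_def)
  then have "real_of_int (b i) = (c1 * a 0) * (c2 * a i)" using c1 assms(2) by (simp add: algebra_simps)
  also have "\<dots> = real_of_int (b 0 * delta_coeffs i)" using c1 c2 assms(2) by simp
  finally show ?thesis by (simp only: of_int_eq_iff)
qed

lemma null_coeffs_eq: "null_coeffs C l = delta_coeffs"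
  unfolding null_coeffs_def
proof (rule the_equality)
  show "(\<forall>j\<le>l. 0 < delta_coeffs j) \<and> (\<forall>j>l. delta_coeffs j = 0) \<and>
      (\<forall>i\<le>l. (\<Sum>j\<le>l. C i j * delta_coeffs j) = 0) \<and> Gcd (delta_coeffs ` {..l}) = 1"
  proof (intro conjI allI impI)
    show "0 < delta_coeffs j" if "j \<le> l" for j using that theta_pos[of j] by (auto simp: delta_coeffs_def)
    show "Gcd (delta_coeffs ` {..l}) = 1"
      by (rule Gcd_eq_1_I[of 1]) (auto simp: delta_coeffs_def image_iff intro!: bexI[of _ 0])
    show "delta_coeffs j = 0" if "l < j" for j using that by (simp add: delta_coeffs_def)
  qed (rule C_delta_coeffs)
next
  fix b assume b: "(\<forall>j\<le>l. 0 < b j) \<and> (\<forall>j>l. b j = (0::int)) \<and>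
      (\<forall>i\<le>l. (\<Sum>j\<le>l. C i j * b j) = 0) \<and> Gcd (b ` {..l}) = 1"
  have proportional: "b i = b 0 * delta_coeffs i" if "i \<le> l" for i
    by (rule null_vector_proportional) (use b that in auto)
  have "b 0 dvd Gcd (b ` {..l})"
  proof (rule Gcd_greatest)
    fix c assume "c \<in> b ` {..l}"
    then obtain i where "i \<le> l" "c = b i" by auto
    then show "b 0 dvd c" using proportional[of i] by simp
  qed
  then have "\<bar>b 0\<bar> = 1" using b by simp
  moreover have "0 < b 0" using b by simp
  ultimately have "b 0 = 1" by simp
  show "b = delta_coeffs"
  proof
    fix k show "b k = delta_coeffs k"
      using proportional[of k] \<open>b 0 = 1\<close> b by (cases "k \<le> l") (simp_all add: delta_coeffs_def)
  qed
qed

lemma delta_eq: "delta C l = (\<lambda>b. alpha 0 b + lift \<theta> b)"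
proof
  fix b show "delta C l b = alpha 0 b + lift \<theta> b"
    by (cases b) (auto simp: delta_def null_coeffs_eq delta_coeffs_def alpha_def)
qed

definition shifted :: "(nat \<Rightarrow> int) \<Rightarrow> weight" where
  "shifted \<gamma> = (\<lambda>b. Lambda0 b - delta C l b + lift \<gamma> b)"

lemma pair_delta: "j \<in> {1..l} \<Longrightarrow> pair C l (delta C l) j = 0"
  unfolding delta_eq by (simp add: pair_add pair_alpha pair_lift_theta)

lemma pair_shifted: "j \<in> {1..l} \<Longrightarrow> pair C l (shifted \<gamma>) j = pair C l (lift \<gamma>) j"
  unfolding shifted_def by (simp only: pair_add pair_diff) (simp add: pair_Lambda0 pair_delta)

lemma refl_shifted:
  assumes "j \<in> {1..l}" "pair C l (lift \<gamma>) j = 1"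
  shows "refl C l j (shifted \<gamma>) = shifted (\<gamma>(j := \<gamma> j - 1))"
proof
  fix b
  show "refl C l j (shifted \<gamma>) b = shifted (\<gamma>(j := \<gamma> j - 1)) b"
    using assms pair_shifted[OF assms(1)] by (cases b) (auto simp: refl_apply shifted_def alpha_def)
qed

lemma word_act_0_Lambda0: "word_act C l [0] Lambda0 = shifted \<theta>"
  by (auto simp: fun_eq_iff word_act_Cons word_act_Nil refl_apply pair_Lambda0 shifted_def delta_eq)

lemma fin_root_descent:
  assumes root: "\<beta> \<in> fin_roots C {1..l}" and pos: "\<And>k. k \<in> {1..l} \<Longrightarrow> 0 \<le> \<beta> k" and "\<beta> \<noteq> \<theta>"
  obtains j where "j \<in> {1..l}" "pair C l (lift \<beta>) j = -1"
proof -
  obtain j where "j \<in> {1..l}" "pair C l (lift \<beta>) j < 0"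
    using dominant_fin_root_eq_theta[OF root] \<open>\<beta> \<noteq> \<theta>\<close> by force
  then show ?thesis using that pair_lift_pos_fin_root_ge[OF root pos] by force
qed

text \<open>Induction on the height of \<open>\<theta> - \<beta>\<close>: a descent \<open>j\<close> of \<open>\<beta>\<close> gives the positive root
  \<open>\<beta> + \<alpha>\<^sub>j\<close>, whose path extended by \<open>r\<^sub>j\<close> reaches \<open>\<Lambda>\<^sub>0 - \<delta> + \<beta>\<close>.\<close>
lemma minuscule_path_to_shifted:
  assumes "\<beta> \<in> fin_roots C {1..l}" "\<And>k. k \<in> {1..l} \<Longrightarrow> 0 \<le> \<beta> k"
  shows "\<exists>js. set js \<subseteq> {1..l} \<and> minuscule_path (0 # js) \<and> word_act C l (0 # js) Lambda0 = shifted \<beta>"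
  using assms
proof (induction "nat (\<Sum>k\<in>{1..l}. \<theta> k - \<beta> k)" arbitrary: \<beta> rule: less_induct)
  case less
  note root = less.prems(1) and pos = less.prems(2)
  show ?case
  proof (cases "\<beta> = \<theta>")
    case True
    have "minuscule_path [0]" by (simp add: minuscule_path_def word_act_Nil pair_Lambda0)
    then show ?thesis using True word_act_0_Lambda0 by (intro exI[of _ "[]"]) simp
  next
    case False
    obtain j where j: "j \<in> {1..l}" and p: "pair C l (lift \<beta>) j = -1"
      using fin_root_descent[OF root pos False] .
    have jl: "j \<le> l" using j by simp
    define \<beta>' where "\<beta>' = fin_refl C {1..l} j \<beta>"
    have \<beta>': "\<beta>' = \<beta>(j := \<beta> j + 1)" using p by (simp add: \<beta>'_def fin_refl_def pair_lift)
    have root': "\<beta>' \<in> fin_roots C {1..l}" unfolding \<beta>'_def using fin_refl_fin_root[OF root j] .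
    have "(\<Sum>k\<in>{1..l}. \<theta> k - \<beta>' k) = (\<Sum>k\<in>{1..l}. (\<theta> k - \<beta> k) - (if k = j then 1 else 0))"
      unfolding \<beta>' by (intro sum.cong) auto
    also have "\<dots> = (\<Sum>k\<in>{1..l}. \<theta> k - \<beta> k) - 1" using j by (simp add: sum_subtractf)
    finally have "nat (\<Sum>k\<in>{1..l}. \<theta> k - \<beta>' k) < nat (\<Sum>k\<in>{1..l}. \<theta> k - \<beta> k)"
      using sum_nonneg[of "{1..l}" "\<lambda>k. \<theta> k - \<beta>' k"] theta_highest[OF root'] by force
    then obtain js where js: "set js \<subseteq> {1..l}" "minuscule_path (0 # js)"
      "word_act C l (0 # js) Lambda0 = shifted \<beta>'"
      using less.hyps[of \<beta>'] root' pos \<beta>' by fastforce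
    have "pair C l (lift \<beta>') j = 1"
      using refl_lift[OF j, of \<beta>] pair_refl[OF jl, of "lift \<beta>" j] p diag[OF jl] \<beta>'_def by simp
    then have "minuscule_path (0 # js) \<and> j \<le> l \<and> pair C l (word_act C l (0 # js) Lambda0) j = 1"
      using js(2,3) jl pair_shifted[OF j] by simp
    then have path: "minuscule_path ((0 # js) @ [j])" by (simp only: minuscule_path_snoc)
    have "word_act C l ((0 # js) @ [j]) Lambda0 = refl C l j (shifted \<beta>')"
      by (simp only: word_act_snoc js(3))
    also have "\<dots> = shifted (\<beta>'(j := \<beta>' j - 1))" by (rule refl_shifted[OF j \<open>pair C l (lift \<beta>') j = 1\<close>])
    also have "\<beta>'(j := \<beta>' j - 1) = \<beta>" by (simp add: \<beta>')
    finally have "word_act C l ((0 # js) @ [j]) Lambda0 = shifted \<beta>" .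
    then show ?thesis using path js(1) j by (intro exI[of _ "js @ [j]"]) auto
  qed
qed

lemma unique_minuscule_Lambda0_minus_delta_plus_alpha:
  assumes i: "i \<in> {1..l}"
  shows "\<exists>!w. w \<in> weyl_group C l \<and> minuscule C l Lambda0 w \<and>
           w Lambda0 = (\<lambda>b. Lambda0 b - delta C l b + alpha i b)"
proof -
  have target: "(\<lambda>b. Lambda0 b - delta C l b + alpha i b) = shifted (unitv i)"
    by (simp add: shifted_def lift_unitv[OF i])
  obtain js where js: "set js \<subseteq> {1..l}" "minuscule_path (0 # js)"
    "word_act C l (0 # js) Lambda0 = shifted (unitv i)"
  proof -
    have "\<exists>js. set js \<subseteq> {1..l} \<and> minuscule_path (0 # js) \<and> word_act C l (0 # js) Lambda0 = shifted (unitv i)"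
      by (rule minuscule_path_to_shifted[OF unitv_fin_root[OF i]]) (simp add: unitv_def)
    then show ?thesis using that by blast
  qed
  show ?thesis
  proof (rule ex1I[of _ "word_act C l (0 # js)"], unfold target)
    show "word_act C l (0 # js) \<in> weyl_group C l \<and> minuscule C l Lambda0 (word_act C l (0 # js)) \<and>
      word_act C l (0 # js) Lambda0 = shifted (unitv i)"
    proof -
      have "set (0 # js) \<subseteq> {0..l}" using js(1) by auto
      then show ?thesis unfolding weyl_group_def minuscule_Lambda0_iff using js by blast
    qed
  next
    fix w assume "w \<in> weyl_group C l \<and> minuscule C l Lambda0 w \<and> w Lambda0 = shifted (unitv i)"
    then obtain ws where "minuscule_path ws" "w = word_act C l ws" "word_act C l ws Lambda0 = shifted (unitv i)"
      by (auto simp: minuscule_Lambda0_iff)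
    then show "w = word_act C l (0 # js)" using minuscule_path_unique[OF js(2)] js(3) by simp
  qed
qed

end

lemma symmetric_affine_if_untwisted_affine:
  assumes "untwisted_affine C l" "\<forall>i\<le>l. \<forall>j\<le>l. C i j = C j i"
  obtains \<theta> a where "symmetric_affine C l \<theta> a"
proof -
  have gcm: "gcm C {0..l}" and aff: "affine_type C {0..l}" and indec: "indecomposable C {0..l}"
    using assms(1) unfolding untwisted_affine_def by auto
  obtain ws m where wm: "set ws \<subseteq> {1..l}" "m \<in> {1..l}"
    "\<forall>\<beta>\<in>fin_roots C {1..l}. \<forall>j\<in>{1..l}. \<beta> j \<le> fold (fin_refl C {1..l}) ws (unitv m) j"
    "\<forall>j\<in>{1..l}. C j 0 = - (\<Sum>k\<in>{1..l}. C j k * fold (fin_refl C {1..l}) ws (unitv m) k)"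
    using assms(1) unfolding untwisted_affine_def Let_def by blast
  obtain u where u_pos: "\<forall>i\<in>{0..l}. u i > 0" and u_null: "\<forall>i\<in>{0..l}. mvec C {0..l} u i = 0"
    using aff unfolding affine_type_def by blast
  obtain u1 where u1: "\<And>v. \<forall>i\<in>{0..l}. mvec C {0..l} v i = 0 \<Longrightarrow> \<exists>c. \<forall>i\<in>{0..l}. v i = c * u1 i"
    using aff unfolding affine_type_def by blast
  obtain c0 where c0: "\<forall>i\<in>{0..l}. u i = c0 * u1 i" using u1 u_null by blast
  have "c0 \<noteq> 0" using c0 u_pos by fastforce
  have null_unique: "\<exists>c. \<forall>k\<le>l. v k = c * u k"
    if v_null: "\<And>k. k \<le> l \<Longrightarrow> (\<Sum>m\<le>l. real_of_int (C k m) * v m) = 0" for v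
  proof -
    obtain c where "\<forall>i\<in>{0..l}. v i = c * u1 i"
      using u1[of v] v_null by (auto simp: mvec_def atLeast0AtMost)
    then show ?thesis using c0 \<open>c0 \<noteq> 0\<close> by (intro exI[of _ "c / c0"]) auto
  qed
  have "symmetric_affine C l (fold (fin_refl C {1..l}) ws (unitv m)) u"
  proof (unfold_locales)
    show "\<exists>c. \<forall>k\<le>l. v k = c * u k" if "\<And>k. k \<le> l \<Longrightarrow> (\<Sum>m\<le>l. real_of_int (C k m) * v m) = 0" for v
      using null_unique that by blast
  qed (use gcm assms(2) indec u_pos u_null wm in
      \<open>auto simp: gcm_def mvec_def atLeast0AtMost fin_roots_iff\<close>)
  then show ?thesis using that by blast
qed

theorem lemma5p22:
  fixes C :: cmat and l i :: nat
  assumes "untwisted_affine C l"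
    and "\<forall>a\<le>l. \<forall>b\<le>l. C a b = C b a"
    and "i \<in> {1..l}"
  shows "\<exists>!w. w \<in> weyl_group C l \<and> minuscule C l Lambda0 w \<and>
           w Lambda0 = (\<lambda>b. Lambda0 b - delta C l b + alpha i b)"
proof -
  obtain \<theta> a where "symmetric_affine C l \<theta> a"
    using symmetric_affine_if_untwisted_affine[OF assms(1,2)] .
  then interpret symmetric_affine C l \<theta> a .
  show ?thesis using unique_minuscule_Lambda0_minus_delta_plus_alpha[OF assms(3)] .
qed

end
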